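(* The theory $\mathrm{IKP}$ does not prove $\mathrm{PlUb}$. Specifically, $1 \in \mathrm{PlOrd}$, yet $\mathrm{IKP}$ does not prove that the plump successor $1^{\mathrm{pl}+}$ exists as a set.
   Context: $\mathrm{IKP}$ is intuitionistic Kripke–Platek set theory (with strong infinity). An ordinal is a transitive set of transitive sets. For sets $\alpha,\gamma$, $\mathrm{relpl}_\alpha(\gamma)$ denotes $\forall \delta \in \gamma\ \forall \varepsilon \in \alpha\,(\varepsilon \subseteq \delta \rightarrow \varepsilon \in \gamma)$. $\mathrm{PlOrd}$ is the class of ordinals $\alpha$ such that for all $\beta \in \alpha$ and all $\gamma \subseteq \beta$ with $\mathrm{relpl}_\alpha(\gamma)$, we have $\gamma \in \alpha$ and $\forall \delta \in \alpha\,(\beta \in \delta \rightarrow \gamma \in \delta)$. For $\alpha \in \mathrm{PlOrd}$, the plump successor is $\alpha^{\mathrm{pl}+} = \{\beta \subseteq \alpha : \mathrm{relpl}_\alpha(\beta)\} = \mathcal{P}(\alpha) \cap \mathrm{PlOrd}$ (when this is a set). $\mathrm{PlUb}$ is the axiom $\forall \alpha \in \mathrm{PlOrd}\ \exists \beta \in \mathrm{PlOrd}\ \alpha \in \beta$. *)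

theory Defs
  imports Main
begin

text \<open>Variables are de Bruijn indices: index 0 refers to the innermost binder.
  The only non-logical symbol is membership; equality is logical.\<close>

datatype fm =
    Mem nat nat          (* Mem x y  :  x \<in> y *)
  | Eq nat nat
  | FF
  | Conj fm fm
  | Disj fm fm
  | Imp fm fm
  | All fm
  | Ex fm

definition Iff :: "fm \<Rightarrow> fm \<Rightarrow> fm" where
  "Iff a b = Conj (Imp a b) (Imp b a)"

definition liftv :: "nat \<Rightarrow> nat \<Rightarrow> nat" where
  "liftv k n = (if n < k then n else Suc n)"

fun lift :: "nat \<Rightarrow> fm \<Rightarrow> fm" where
  "lift k (Mem a b) = Mem (liftv k a) (liftv k b)"
| "lift k (Eq a b) = Eq (liftv k a) (liftv k b)"
| "lift k FF = FF"
| "lift k (Conj p q) = Conj (lift k p) (lift k q)"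
| "lift k (Disj p q) = Disj (lift k p) (lift k q)"
| "lift k (Imp p q) = Imp (lift k p) (lift k q)"
| "lift k (All p) = All (lift (Suc k) p)"
| "lift k (Ex p) = Ex (lift (Suc k) p)"

definition substv :: "nat \<Rightarrow> nat \<Rightarrow> nat \<Rightarrow> nat" where
  "substv k t n = (if n < k then n else if n = k then t else n - 1)"

fun subst :: "fm \<Rightarrow> nat \<Rightarrow> nat \<Rightarrow> fm" where
  "subst (Mem a b) k t = Mem (substv k t a) (substv k t b)"
| "subst (Eq a b) k t = Eq (substv k t a) (substv k t b)"
| "subst FF k t = FF"
| "subst (Conj p q) k t = Conj (subst p k t) (subst q k t)"
| "subst (Disj p q) k t = Disj (subst p k t) (subst q k t)"
| "subst (Imp p q) k t = Imp (subst p k t) (subst q k t)"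
| "subst (All p) k t = All (subst p (Suc k) (Suc t))"
| "subst (Ex p) k t = Ex (subst p (Suc k) (Suc t))"

inductive prv :: "fm set \<Rightarrow> fm set \<Rightarrow> fm \<Rightarrow> bool" for T :: "fm set" where
  Ax:     "\<phi> \<in> T \<Longrightarrow> prv T \<Gamma> \<phi>"
| Assm:   "\<phi> \<in> \<Gamma> \<Longrightarrow> prv T \<Gamma> \<phi>"
| FFE:    "prv T \<Gamma> FF \<Longrightarrow> prv T \<Gamma> \<phi>"
| ConjI:  "prv T \<Gamma> \<phi> \<Longrightarrow> prv T \<Gamma> \<psi> \<Longrightarrow> prv T \<Gamma> (Conj \<phi> \<psi>)"
| ConjE1: "prv T \<Gamma> (Conj \<phi> \<psi>) \<Longrightarrow> prv T \<Gamma> \<phi>"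
| ConjE2: "prv T \<Gamma> (Conj \<phi> \<psi>) \<Longrightarrow> prv T \<Gamma> \<psi>"
| DisjI1: "prv T \<Gamma> \<phi> \<Longrightarrow> prv T \<Gamma> (Disj \<phi> \<psi>)"
| DisjI2: "prv T \<Gamma> \<psi> \<Longrightarrow> prv T \<Gamma> (Disj \<phi> \<psi>)"
| DisjE:  "prv T \<Gamma> (Disj \<phi> \<psi>) \<Longrightarrow> prv T (insert \<phi> \<Gamma>) \<chi> \<Longrightarrow> prv T (insert \<psi> \<Gamma>) \<chi>
           \<Longrightarrow> prv T \<Gamma> \<chi>"
| ImpI:   "prv T (insert \<phi> \<Gamma>) \<psi> \<Longrightarrow> prv T \<Gamma> (Imp \<phi> \<psi>)"
| ImpE:   "prv T \<Gamma> (Imp \<phi> \<psi>) \<Longrightarrow> prv T \<Gamma> \<phi> \<Longrightarrow> prv T \<Gamma> \<psi>"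
| AllI:   "prv T (lift 0 ` \<Gamma>) \<phi> \<Longrightarrow> prv T \<Gamma> (All \<phi>)"
| AllE:   "prv T \<Gamma> (All \<phi>) \<Longrightarrow> prv T \<Gamma> (subst \<phi> 0 t)"
| ExI:    "prv T \<Gamma> (subst \<phi> 0 t) \<Longrightarrow> prv T \<Gamma> (Ex \<phi>)"
| ExE:    "prv T \<Gamma> (Ex \<phi>) \<Longrightarrow> prv T (insert \<phi> (lift 0 ` \<Gamma>)) (lift 0 \<psi>) \<Longrightarrow> prv T \<Gamma> \<psi>"
| EqRefl: "prv T \<Gamma> (Eq t t)"
| EqSubst: "prv T \<Gamma> (Eq s t) \<Longrightarrow> prv T \<Gamma> (subst \<phi> 0 s) \<Longrightarrow> prv T \<Gamma> (subst \<phi> 0 t)"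

section \<open>Defined formulas (arguments are de Bruijn indices of free variables)\<close>

definition subsetf :: "nat \<Rightarrow> nat \<Rightarrow> fm" where
  "subsetf a b = All (Imp (Mem 0 (Suc a)) (Mem 0 (Suc b)))"

definition isEmpty :: "nat \<Rightarrow> fm" where
  "isEmpty v = All (Imp (Mem 0 (Suc v)) FF)"

definition isOne :: "nat \<Rightarrow> fm" where
  "isOne v = All (Iff (Mem 0 (Suc v)) (isEmpty 0))"

definition isSucc :: "nat \<Rightarrow> nat \<Rightarrow> fm" where
  "isSucc z y = All (Iff (Mem 0 (Suc z)) (Disj (Mem 0 (Suc y)) (Eq 0 (Suc y))))"

definition ind :: "nat \<Rightarrow> fm" where
  "ind v = Conj (Ex (Conj (Mem 0 (Suc v)) (isEmpty 0)))
                (All (Imp (Mem 0 (Suc v)) (Ex (Conj (Mem 0 (v + 2)) (isSucc 0 1)))))"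

definition transf :: "nat \<Rightarrow> fm" where
  "transf v = All (Imp (Mem 0 (Suc v)) (subsetf 0 (Suc v)))"

definition ordf :: "nat \<Rightarrow> fm" where
  "ordf v = Conj (transf v) (All (Imp (Mem 0 (Suc v)) (transf 0)))"

definition relpl :: "nat \<Rightarrow> nat \<Rightarrow> fm" where
  (* relpl_a(g): \<forall>\<delta>\<in>g \<forall>\<epsilon>\<in>a (\<epsilon> \<subseteq> \<delta> \<longrightarrow> \<epsilon> \<in> g) *)
  "relpl a g = All (Imp (Mem 0 (Suc g))
                  (All (Imp (Mem 0 (a + 2)) (Imp (subsetf 0 1) (Mem 0 (g + 2))))))"

definition plord :: "nat \<Rightarrow> fm" where
  (* a \<in> PlOrd: ordinal, and \<forall>\<beta>\<in>a \<forall>\<gamma>(\<gamma>\<subseteq>\<beta> \<and> relpl_a(\<gamma>) \<longrightarrow> \<gamma>\<in>a \<and> \<forall>\<delta>\<in>a(\<beta>\<in>\<delta> \<longrightarrow> \<gamma>\<in>\<delta>)) *)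
  "plord a = Conj (ordf a)
     (All (Imp (Mem 0 (Suc a))
        (All (Imp (Conj (subsetf 0 1) (relpl (a + 2) 0))
               (Conj (Mem 0 (a + 2))
                     (All (Imp (Mem 0 (a + 3)) (Imp (Mem 2 0) (Mem 1 0)))))))))"

inductive Delta0 :: "fm \<Rightarrow> bool" where
  "Delta0 (Mem a b)"
| "Delta0 (Eq a b)"
| "Delta0 FF"
| "Delta0 p \<Longrightarrow> Delta0 q \<Longrightarrow> Delta0 (Conj p q)"
| "Delta0 p \<Longrightarrow> Delta0 q \<Longrightarrow> Delta0 (Disj p q)"
| "Delta0 p \<Longrightarrow> Delta0 q \<Longrightarrow> Delta0 (Imp p q)"
| "Delta0 p \<Longrightarrow> Delta0 (All (Imp (Mem 0 (Suc a)) p))"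
| "Delta0 p \<Longrightarrow> Delta0 (Ex (Conj (Mem 0 (Suc a)) p))"

text \<open>Schemata may contain free variables (parameters); an axiom with free variables
  acts as its universal closure, since axioms are available in every context.\<close>

inductive_set IKP :: "fm set" where
  extensionality:
    "All (All (Imp (All (Iff (Mem 0 2) (Mem 0 1))) (Eq 1 0))) \<in> IKP"
| empty_set: "Ex (isEmpty 0) \<in> IKP"
| pairing: "All (All (Ex (Conj (Mem 2 0) (Mem 1 0)))) \<in> IKP"
| union: "All (Ex (All (Imp (Mem 0 2) (All (Imp (Mem 0 1) (Mem 0 2)))))) \<in> IKP"
| delta0_separation:
    (* \<exists>b \<forall>x (x\<in>b \<longleftrightarrow> x\<in>a \<and> \<phi>(x)) ; \<phi> has x as index 0 *)
    "Delta0 \<phi> \<Longrightarrow> Ex (All (Iff (Mem 0 1) (Conj (Mem 0 (a + 2)) (lift 1 \<phi>)))) \<in> IKP"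
| delta0_collection:
    (* \<forall>x\<in>a \<exists>y \<phi>(x,y) \<longrightarrow> \<exists>b \<forall>x\<in>a \<exists>y\<in>b \<phi>(x,y) ; in \<phi>, y is index 0, x is index 1 *)
    "Delta0 \<phi> \<Longrightarrow>
      Imp (All (Imp (Mem 0 (Suc a)) (Ex \<phi>)))
          (Ex (All (Imp (Mem 0 (a + 2)) (Ex (Conj (Mem 0 2) (lift 2 \<phi>)))))) \<in> IKP"
| set_induction:
    "Imp (All (Imp (All (Imp (Mem 0 1) (lift 1 \<phi>))) \<phi>)) (All \<phi>) \<in> IKP"
| strong_infinity:
    "Ex (Conj (ind 0) (All (Imp (ind 0) (subsetf 1 0)))) \<in> IKP"

definition IKP_proves :: "fm \<Rightarrow> bool" where
  "IKP_proves \<phi> = prv IKP {} \<phi>"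

definition PlUb :: fm where
  "PlUb = All (Imp (plord 0) (Ex (Conj (plord 0) (Mem 1 0))))"

definition one_PlOrd :: fm where
  "one_PlOrd = All (Imp (isOne 0) (plord 0))"

definition one_plsucc_exists :: fm where
  "one_plsucc_exists =
     All (Imp (isOne 0) (Ex (All (Iff (Mem 0 1) (Conj (subsetf 0 2) (relpl 2 0))))))"

end

theory Submission
  imports Defs "HOL-Library.Countable_Set_Type"
begin

text \<open>
  Take the Kripke frame of a root below countably many pairwise incomparable leaves and, over it,
  the model of IKP whose elements are names: countable sets of pairs of a name and a truth value,
  i.e. an upward closed set of worlds. For every S \<subseteq> \<nat>, the subset of 1 = {0} that contains 0
  exactly at the leaves in S is a plump subset of 1, and at the root no two of these are equal.
  So both a set of all plump subsets of 1 and a plump ordinal containing 1 would need uncountably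
  many children, which no name has. That 1 is a plump ordinal is even a theorem of pure logic.
\<close>

section \<open>Kripke frame and names\<close>

datatype world = Root | Leaf nat

instance world :: countable by countable_datatype

definition wle :: "world \<Rightarrow> world \<Rightarrow> bool" (infix "\<preceq>" 50) where
  "w \<preceq> v \<longleftrightarrow> w = Root \<or> w = v"

lemma wle_refl [simp]: "w \<preceq> w"
  by (simp add: wle_def)

lemma wle_trans: "u \<preceq> v \<Longrightarrow> v \<preceq> w \<Longrightarrow> u \<preceq> w"
  by (auto simp: wle_def)

lemma Root_wle [simp]: "Root \<preceq> v"
  by (simp add: wle_def)

text \<open>Truth values are the upward closed sets of worlds; one containing the root is everything.\<close>

datatype truth = Always | On_leaves "nat set"

fun holds :: "world \<Rightarrow> truth \<Rightarrow> bool" where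
  "holds w Always = True"
| "holds Root (On_leaves S) = False"
| "holds (Leaf n) (On_leaves S) = (n \<in> S)"

lemma holds_mono: "w \<preceq> v \<Longrightarrow> holds w t \<Longrightarrow> holds v t"
  by (cases t) (auto simp: wle_def)

definition truth_meet :: "truth \<Rightarrow> truth \<Rightarrow> truth" where
  "truth_meet t u = (case (t, u) of
      (Always, _) \<Rightarrow> u
    | (_, Always) \<Rightarrow> t
    | (On_leaves S, On_leaves S') \<Rightarrow> On_leaves (S \<inter> S'))"

lemma holds_truth_meet [simp]: "holds w (truth_meet t u) \<longleftrightarrow> holds w t \<and> holds w u"
  by (cases w; cases t; cases u) (auto simp: truth_meet_def)

definition truth_of :: "world set \<Rightarrow> truth" where
  "truth_of U = (if Root \<in> U then Always else On_leaves {n. Leaf n \<in> U})"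

lemma holds_truth_of:
  assumes "\<And>v v'. v \<in> U \<Longrightarrow> v \<preceq> v' \<Longrightarrow> v' \<in> U"
  shows "holds w (truth_of U) \<longleftrightarrow> w \<in> U"
  using assms by (cases w) (auto simp: truth_of_def)

definition principal :: "world \<Rightarrow> truth" where
  "principal v = (case v of Root \<Rightarrow> Always | Leaf n \<Rightarrow> On_leaves {n})"

lemma holds_principal [simp]: "holds w (principal v) \<longleftrightarrow> v \<preceq> w"
  by (cases v; cases w) (auto simp: principal_def wle_def)

text \<open>The bounded natural functor cset, unlike set, admits this recursion.\<close>

datatype name = Name "(name \<times> truth) cset"

definition children :: "name \<Rightarrow> (name \<times> truth) set" where
  "children x = (case x of Name c \<Rightarrow> rcset c)"

definition mk_name :: "(name \<times> truth) set \<Rightarrow> name" where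
  "mk_name A = Name (acset A)"

lemma countable_children [simp]: "countable (children x)"
  by (cases x) (simp add: children_def)

lemma children_mk_name [simp]: "countable A \<Longrightarrow> children (mk_name A) = A"
  by (simp add: mk_name_def children_def acset_inverse)

lemma name_induct [case_names children]:
  assumes "\<And>x. (\<And>y t. (y, t) \<in> children x \<Longrightarrow> P y) \<Longrightarrow> P x"
  shows "P x"
proof (induction x rule: name.induct)
  case (Name c)
  show ?case
    by (rule assms) (force simp: children_def intro: Name)
qed

inductive feq :: "world \<Rightarrow> name \<Rightarrow> name \<Rightarrow> bool" where
  feqI: "(\<forall>v. w \<preceq> v \<longrightarrow>
     (\<forall>p\<in>children x. holds v (snd p) \<longrightarrow>
        (\<exists>q\<in>children y. holds v (snd q) \<and> feq v (fst p) (fst q))) \<and>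
     (\<forall>q\<in>children y. holds v (snd q) \<longrightarrow>
        (\<exists>p\<in>children x. holds v (snd p) \<and> feq v (fst p) (fst q))))
   \<Longrightarrow> feq w x y"

lemma feq_iff: "feq w x y \<longleftrightarrow> (\<forall>v. w \<preceq> v \<longrightarrow>
     (\<forall>p\<in>children x. holds v (snd p) \<longrightarrow>
        (\<exists>q\<in>children y. holds v (snd q) \<and> feq v (fst p) (fst q))) \<and>
     (\<forall>q\<in>children y. holds v (snd q) \<longrightarrow>
        (\<exists>p\<in>children x. holds v (snd p) \<and> feq v (fst p) (fst q))))"
  by (subst feq.simps) auto

lemma feq_refl [simp]: "feq w x x"
proof (induction x arbitrary: w rule: name_induct)
  case (children x)
  show ?case by (subst feq_iff) (force intro: children)
qed

lemma feq_sym: "feq w x y \<Longrightarrow> feq w y x"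
proof (induction rule: feq.induct)
  case (feqI w x y)
  show ?case by (rule feq.feqI) (metis feqI)
qed

lemma feq_trans: "feq w x y \<Longrightarrow> feq w y z \<Longrightarrow> feq w x z"
proof (induction x arbitrary: w y z rule: name_induct)
  case (children x)
  show ?case
  proof (subst feq_iff, intro allI impI conjI ballI)
    fix v p assume v: "w \<preceq> v" and p: "p \<in> children x" "holds v (snd p)"
    from children.prems(1) v p obtain q
      where q: "q \<in> children y" "holds v (snd q)" "feq v (fst p) (fst q)"
      by (subst (asm) feq_iff) blast
    from children.prems(2) v q obtain r
      where r: "r \<in> children z" "holds v (snd r)" "feq v (fst q) (fst r)"
      by (subst (asm) feq_iff) blast
    show "\<exists>r\<in>children z. holds v (snd r) \<and> feq v (fst p) (fst r)"
      using children.IH[of "fst p" "snd p"] p q r by auto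
  next
    fix v r assume v: "w \<preceq> v" and r: "r \<in> children z" "holds v (snd r)"
    from children.prems(2) v r obtain q
      where q: "q \<in> children y" "holds v (snd q)" "feq v (fst q) (fst r)"
      by (subst (asm) feq_iff) blast
    from children.prems(1) v q obtain p
      where p: "p \<in> children x" "holds v (snd p)" "feq v (fst p) (fst q)"
      by (subst (asm) feq_iff) blast
    show "\<exists>p\<in>children x. holds v (snd p) \<and> feq v (fst p) (fst r)"
      using children.IH[of "fst p" "snd p"] p q r by auto
  qed
qed

lemma feq_mono: "w \<preceq> v \<Longrightarrow> feq w x y \<Longrightarrow> feq v x y"
  by (subst feq_iff, subst (asm) feq_iff) (meson wle_trans)

definition fmem :: "world \<Rightarrow> name \<Rightarrow> name \<Rightarrow> bool" where
  "fmem w z y \<longleftrightarrow> (\<exists>q\<in>children y. holds w (snd q) \<and> feq w z (fst q))"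

lemma fmem_mono: "w \<preceq> v \<Longrightarrow> fmem w z y \<Longrightarrow> fmem v z y"
  unfolding fmem_def by (meson holds_mono feq_mono)

lemma fmem_feq_left: "fmem w z y \<Longrightarrow> feq w z z' \<Longrightarrow> fmem w z' y"
  unfolding fmem_def by (meson feq_sym feq_trans)

lemma fmem_feq_right: "fmem w z y \<Longrightarrow> feq w y y' \<Longrightarrow> fmem w z y'"
proof -
  assume "fmem w z y" "feq w y y'"
  then obtain q where q: "q \<in> children y" "holds w (snd q)" "feq w z (fst q)"
    unfolding fmem_def by blast
  with \<open>feq w y y'\<close> obtain r where "r \<in> children y'" "holds w (snd r)" "feq w (fst q) (fst r)"
    by (subst (asm) feq_iff) (meson wle_refl)
  with q show ?thesis unfolding fmem_def by (meson feq_trans)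
qed

lemma fmem_childI: "(z, t) \<in> children y \<Longrightarrow> holds w t \<Longrightarrow> fmem w z y"
  unfolding fmem_def by force

lemma feq_extensional:
  assumes "\<And>v z. w \<preceq> v \<Longrightarrow> fmem v z x \<longleftrightarrow> fmem v z y"
  shows "feq w x y"
proof (rule feq.feqI, intro allI impI conjI ballI)
  fix v p assume "w \<preceq> v" "p \<in> children x" "holds v (snd p)"
  then have "fmem v (fst p) y"
    using assms fmem_childI[of "fst p" "snd p" x v] by simp
  then show "\<exists>q\<in>children y. holds v (snd q) \<and> feq v (fst p) (fst q)"
    unfolding fmem_def .
next
  fix v q assume "w \<preceq> v" "q \<in> children y" "holds v (snd q)"
  then have "fmem v (fst q) x"
    using assms fmem_childI[of "fst q" "snd q" y v] by simp
  then show "\<exists>p\<in>children x. holds v (snd p) \<and> feq v (fst p) (fst q)"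
    unfolding fmem_def by (auto intro: feq_sym)
qed

section \<open>Forcing\<close>

fun forces :: "world \<Rightarrow> (nat \<Rightarrow> name) \<Rightarrow> fm \<Rightarrow> bool" where
  "forces w e (Mem a b) = fmem w (e a) (e b)"
| "forces w e (Eq a b) = feq w (e a) (e b)"
| "forces w e FF = False"
| "forces w e (Conj p q) = (forces w e p \<and> forces w e q)"
| "forces w e (Disj p q) = (forces w e p \<or> forces w e q)"
| "forces w e (Imp p q) = (\<forall>v. w \<preceq> v \<longrightarrow> forces v e p \<longrightarrow> forces v e q)"
| "forces w e (All p) = (\<forall>v. w \<preceq> v \<longrightarrow> (\<forall>d. forces v (case_nat d e) p))"
| "forces w e (Ex p) = (\<exists>d. forces w (case_nat d e) p)"

lemma forces_mono: "w \<preceq> v \<Longrightarrow> forces w e p \<Longrightarrow> forces v e p"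
proof (induction p arbitrary: w v e)
  case (Mem a b) then show ?case by (simp add: fmem_mono)
next
  case (Eq a b) then show ?case by (simp add: feq_mono)
next
  case (Imp p q) then show ?case by (meson wle_trans forces.simps(6))
next
  case (All p) then show ?case by (meson wle_trans forces.simps(7))
qed auto

lemma forces_All_Imp:
  "forces w e (All (Imp p q)) \<longleftrightarrow>
     (\<forall>v d. w \<preceq> v \<longrightarrow> forces v (case_nat d e) p \<longrightarrow> forces v (case_nat d e) q)"
  by simp (meson wle_refl wle_trans)

text \<open>forces.simps(7) is left out: the simplifier would prefer it to forces_All_Imp.\<close>

lemmas forces_bounded_simps = forces_All_Imp forces.simps(1-6) forces.simps(8)

lemma forces_Iff: "forces w e (Iff p q) \<longleftrightarrow> (\<forall>v. w \<preceq> v \<longrightarrow> (forces v e p \<longleftrightarrow> forces v e q))"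
  unfolding Iff_def by simp (meson wle_refl forces_mono)

lemma forces_env_cong: "(\<And>n. feq w (e n) (e' n)) \<Longrightarrow> forces w e p = forces w e' p"
proof (induction p arbitrary: w e e')
  case (Mem a b)
  then show ?case by simp (meson feq_sym fmem_feq_left fmem_feq_right)
next
  case (Eq a b)
  then show ?case by simp (meson feq_sym feq_trans)
next
  case (Imp p q)
  then have "\<And>v. w \<preceq> v \<Longrightarrow> (\<And>n. feq v (e n) (e' n))"
    using feq_mono by blast
  with Imp.IH show ?case by simp blast
next
  case (All p)
  then have "\<And>v d n. w \<preceq> v \<Longrightarrow> feq v (case_nat d e n) (case_nat d e' n)"
    using feq_mono by (auto split: nat.splits)
  with All.IH show ?case by simp blast
next
  case (Ex p)
  then have "\<And>d n. feq w (case_nat d e n) (case_nat d e' n)"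
    by (auto split: nat.splits)
  with Ex.IH show ?case by simp blast
next
  case (Conj p q)
  then show ?case by (simp add: Conj.IH[OF Conj.prems])
next
  case (Disj p q)
  then show ?case by (simp add: Disj.IH[OF Disj.prems])
qed simp

lemma forces_case_nat_feq:
  "forces w (case_nat d e) p \<Longrightarrow> feq w d d' \<Longrightarrow> forces w (case_nat d' e) p"
  using forces_env_cong[of w "case_nat d e" "case_nat d' e" p] by (auto split: nat.splits)

lemma case_nat_comp_liftv: "case_nat d e \<circ> liftv (Suc k) = case_nat d (e \<circ> liftv k)"
  by (rule ext) (auto simp: liftv_def split: nat.splits)

lemma forces_lift: "forces w e (lift k p) = forces w (e \<circ> liftv k) p"
  by (induction p arbitrary: w e k) (simp_all add: case_nat_comp_liftv)

lemma case_nat_comp_substv: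
  "case_nat d e \<circ> substv (Suc k) (Suc t) = case_nat d (e \<circ> substv k t)"
  by (rule ext) (auto simp: substv_def split: nat.splits)

lemma forces_subst: "forces w e (subst p k t) = forces w (e \<circ> substv k t) p"
  by (induction p arbitrary: w e k t) (simp_all add: case_nat_comp_substv)

lemma forces_subst0: "forces w e (subst p 0 t) = forces w (case_nat (e t) e) p"
proof -
  have "e \<circ> substv 0 t = case_nat (e t) e"
    by (rule ext) (auto simp: substv_def split: nat.splits)
  then show ?thesis by (simp add: forces_subst)
qed

lemma forces_lift0: "forces w (case_nat d e) (lift 0 p) = forces w e p"
proof -
  have "case_nat d e \<circ> liftv 0 = e"
    by (rule ext) (auto simp: liftv_def)
  then show ?thesis by (simp add: forces_lift)
qed

theorem prv_sound:
  assumes "prv T \<Gamma> p" and "\<And>q w e. q \<in> T \<Longrightarrow> forces w e q"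
    and "\<And>g. g \<in> \<Gamma> \<Longrightarrow> forces w e g"
  shows "forces w e p"
  using assms(1,3)
proof (induction arbitrary: w e rule: prv.induct)
  case (Ax \<phi> \<Gamma>)
  then show ?case using assms(2) by blast
next
  case (ImpI \<phi> \<Gamma> \<psi>)
  show ?case
  proof (simp, intro allI impI)
    fix v assume "w \<preceq> v" "forces v e \<phi>"
    with ImpI.prems forces_mono show "forces v e \<psi>"
      by (intro ImpI.IH) blast
  qed
next
  case (ImpE \<Gamma> \<phi> \<psi>)
  then show ?case by (metis wle_refl forces.simps(6))
next
  case (DisjE \<Gamma> \<phi> \<psi> \<chi>)
  then show ?case by (metis insert_iff forces.simps(5))
next
  case (AllI \<Gamma> \<phi>)
  show ?case
  proof (simp, intro allI impI)
    fix v d assume "w \<preceq> v"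
    with AllI.prems forces_mono show "forces v (case_nat d e) \<phi>"
      by (intro AllI.IH) (auto simp: forces_lift0)
  qed
next
  case (AllE \<Gamma> \<phi> t)
  then show ?case by (simp add: forces_subst0) (metis wle_refl)
next
  case (ExI \<Gamma> \<phi> t)
  then show ?case by (auto simp: forces_subst0)
next
  case (ExE \<Gamma> \<phi> \<psi>)
  from ExE.IH(1)[OF ExE.prems] obtain d where "forces w (case_nat d e) \<phi>"
    by auto
  then have "forces w (case_nat d e) (lift 0 \<psi>)"
    by (intro ExE.IH(2)) (auto simp: forces_lift0 ExE.prems)
  then show ?case by (simp add: forces_lift0)
next
  case (EqSubst \<Gamma> s t \<phi>)
  then have "feq w (e s) (e t)" and "forces w (case_nat (e s) e) \<phi>"
    by (simp_all add: forces_subst0)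
  then show ?case by (simp add: forces_subst0 forces_case_nat_feq)
qed auto

lemma forces_subsetf:
  "forces w e (subsetf a b) \<longleftrightarrow> (\<forall>v z. w \<preceq> v \<longrightarrow> fmem v z (e a) \<longrightarrow> fmem v z (e b))"
  unfolding subsetf_def forces_All_Imp by simp

lemma forces_isEmpty: "forces w e (isEmpty a) \<longleftrightarrow> (\<forall>v z. w \<preceq> v \<longrightarrow> \<not> fmem v z (e a))"
  unfolding isEmpty_def forces_All_Imp by simp

lemma forces_isSucc:
  "forces w e (isSucc a b) \<longleftrightarrow>
     (\<forall>v z. w \<preceq> v \<longrightarrow> (fmem v z (e a) \<longleftrightarrow> fmem v z (e b) \<or> feq v z (e b)))"
  unfolding isSucc_def by (simp add: forces_Iff) (meson wle_refl wle_trans)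

lemma forces_isOne:
  "forces w e (isOne a) \<longleftrightarrow>
     (\<forall>v z. w \<preceq> v \<longrightarrow> (fmem v z (e a) \<longleftrightarrow> (\<forall>v' y. v \<preceq> v' \<longrightarrow> \<not> fmem v' y z)))"
  unfolding isOne_def by (simp add: forces_Iff forces_isEmpty) (meson wle_refl wle_trans)

lemma case_nat_comp_liftv_1: "case_nat x (case_nat a e) \<circ> liftv (Suc 0) = case_nat x e"
  by (rule ext) (auto simp: liftv_def split: nat.splits)

lemma case_nat_comp_liftv_2: "case_nat y (case_nat x (case_nat a e)) \<circ> liftv 2 = case_nat y (case_nat x e)"
  by (rule ext) (auto simp: liftv_def split: nat.splits)

section \<open>Validity of the IKP axioms\<close>

lemma forces_extensionality: "forces w e (All (All (Imp (All (Iff (Mem 0 2) (Mem 0 1))) (Eq 1 0))))"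
  by (simp add: forces_Iff) (meson feq_extensional wle_refl)

lemma forces_empty_set: "forces w e (Ex (isEmpty 0))"
  by (auto simp: forces_isEmpty fmem_def intro: exI[of _ "mk_name {}"])

lemma forces_pairing: "forces w e (All (All (Ex (Conj (Mem 2 0) (Mem 1 0)))))"
  by (auto intro!: exI[of _ "mk_name {(x, Always), (y, Always)}" for x y] fmem_childI)

definition union_name :: "name \<Rightarrow> name" where
  "union_name a = mk_name (\<Union>(x, t)\<in>children a. (\<lambda>(y, u). (y, truth_meet t u)) ` children x)"

lemma fmem_union_name:
  assumes "w \<preceq> v" and "fmem w x a" and "fmem v z x"
  shows "fmem v z (union_name a)"
proof -
  from \<open>fmem w x a\<close> obtain x' t where x': "(x', t) \<in> children a" "holds w t" "feq w x x'"
    unfolding fmem_def by auto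
  with assms have "fmem v z x'"
    using fmem_feq_right feq_mono by blast
  then obtain z' u where z': "(z', u) \<in> children x'" "holds v u" "feq v z z'"
    unfolding fmem_def by auto
  have "countable (\<Union>(x, t)\<in>children a. (\<lambda>(y, u). (y, truth_meet t u)) ` children x)"
    by (intro countable_UN) auto
  then have "(z', truth_meet t u) \<in> children (union_name a)"
    unfolding union_name_def using x' z' by force
  moreover have "holds v (truth_meet t u)"
    using x' z' holds_mono[OF \<open>w \<preceq> v\<close>] by simp
  ultimately show ?thesis
    using z' by (meson feq_sym fmem_childI fmem_feq_left)
qed

lemma forces_union: "forces w e (All (Ex (All (Imp (Mem 0 2) (All (Imp (Mem 0 1) (Mem 0 2)))))))"
  by simp (meson fmem_union_name wle_trans)

definition sep_name :: "name \<Rightarrow> (world \<Rightarrow> name \<Rightarrow> bool) \<Rightarrow> name" where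
  "sep_name a P = mk_name ((\<lambda>(x, t). (x, truth_meet t (truth_of {v. P v x}))) ` children a)"

lemma fmem_sep_name:
  assumes mono: "\<And>v v' x. P v x \<Longrightarrow> v \<preceq> v' \<Longrightarrow> P v' x"
    and cong: "\<And>v x x'. P v x \<Longrightarrow> feq v x x' \<Longrightarrow> P v x'"
  shows "fmem w x (sep_name a P) \<longleftrightarrow> fmem w x a \<and> P w x"
proof -
  have "holds w (truth_of {v. P v y}) \<longleftrightarrow> P w y" for y
    by (subst holds_truth_of) (auto intro: mono)
  then have "fmem w x (sep_name a P) \<longleftrightarrow>
      (\<exists>y t. (y, t) \<in> children a \<and> holds w t \<and> P w y \<and> feq w x y)"
    by (simp add: sep_name_def fmem_def split_beta) force
  also have "\<dots> \<longleftrightarrow> fmem w x a \<and> P w x"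
    using cong feq_sym by (auto simp: fmem_def) (force, blast)
  finally show ?thesis .
qed

lemma forces_separation: "forces w e (Ex (All (Iff (Mem 0 1) (Conj (Mem 0 (a + 2)) (lift 1 \<phi>)))))"
proof -
  let ?P = "\<lambda>v x. forces v (case_nat x e) \<phi>"
  have "fmem v x (sep_name (e a) ?P) \<longleftrightarrow> fmem v x (e a) \<and> ?P v x" for v x
    by (rule fmem_sep_name) (auto intro: forces_mono forces_case_nat_feq)
  then show ?thesis
    by (auto simp: forces_Iff forces_lift case_nat_comp_liftv_1 intro!: exI[of _ "sep_name (e a) ?P"])
qed

text \<open>A witness Y v x is chosen at each world v and is a member from v upward; there are only
  countably many worlds, so this is still a name.\<close>

definition coll_name :: "name \<Rightarrow> (world \<Rightarrow> name \<Rightarrow> name) \<Rightarrow> name" where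
  "coll_name a Y = mk_name ((\<lambda>((x, t), v). (Y v x, principal v)) ` (children a \<times> UNIV))"

lemma fmem_coll_name:
  assumes total: "\<And>v x. w \<preceq> v \<Longrightarrow> fmem v x a \<Longrightarrow> \<exists>y. S v x y"
    and cong: "\<And>v x x' y. S v x y \<Longrightarrow> feq v x x' \<Longrightarrow> S v x' y"
    and "w \<preceq> v" and "fmem v x a"
  shows "\<exists>y. fmem v y (coll_name a (\<lambda>v x. SOME y. S v x y)) \<and> S v x y"
proof -
  from \<open>fmem v x a\<close> obtain x' t where x': "(x', t) \<in> children a" "holds v t" "feq v x x'"
    unfolding fmem_def by auto
  have "fmem v x' a"
    using x'(1,2) by (rule fmem_childI)
  then have "S v x' (SOME y. S v x' y)"
    using total \<open>w \<preceq> v\<close> by (meson someI_ex)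
  then have "S v x (SOME y. S v x' y)"
    using cong x'(3) feq_sym by blast
  moreover have "((SOME y. S v x' y), principal v) \<in> children (coll_name a (\<lambda>v x. SOME y. S v x y))"
    unfolding coll_name_def using x'(1) by force
  ultimately show ?thesis
    using fmem_childI[of _ "principal v"] by force
qed

lemma forces_collection:
  "forces w e (Imp (All (Imp (Mem 0 (Suc a)) (Ex \<phi>)))
     (Ex (All (Imp (Mem 0 (a + 2)) (Ex (Conj (Mem 0 2) (lift 2 \<phi>)))))))"
proof -
  let ?S = "\<lambda>v x y. forces v (case_nat y (case_nat x e)) \<phi>"
  have cong: "?S v x' y" if "?S v x y" "feq v x x'" for v x x' y
    using that forces_env_cong[of v "case_nat y (case_nat x e)" "case_nat y (case_nat x' e)"]
    by (auto split: nat.splits)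
  have "\<exists>c. \<forall>v' x. v \<preceq> v' \<longrightarrow> fmem v' x (e a) \<longrightarrow> (\<exists>y. fmem v' y c \<and> ?S v' x y)"
    if "\<forall>v' x. v \<preceq> v' \<longrightarrow> fmem v' x (e a) \<longrightarrow> (\<exists>y. ?S v' x y)" for v
    using fmem_coll_name[of v "e a" ?S] that cong by blast
  then show ?thesis
    by (simp only: forces_bounded_simps) (simp add: forces_lift case_nat_comp_liftv_2)
qed

lemma fmem_induct:
  assumes step: "\<And>v a. w \<preceq> v \<Longrightarrow> (\<And>v' x. v \<preceq> v' \<Longrightarrow> fmem v' x a \<Longrightarrow> Q v' x) \<Longrightarrow> Q v a"
    and cong: "\<And>v x x'. Q v x \<Longrightarrow> feq v x x' \<Longrightarrow> Q v x'"
    and "w \<preceq> v"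
  shows "Q v a"
  using \<open>w \<preceq> v\<close>
proof (induction a arbitrary: v rule: name_induct)
  case (children a)
  show ?case
  proof (rule step[OF children.prems])
    fix v' x assume "v \<preceq> v'" "fmem v' x a"
    then obtain x' t where x': "(x', t) \<in> children a" "feq v' x x'"
      unfolding fmem_def by auto
    with children \<open>v \<preceq> v'\<close> have "Q v' x'"
      by (meson wle_trans)
    with x' show "Q v' x"
      using cong feq_sym by blast
  qed
qed

lemma forces_set_induction: "forces w e (Imp (All (Imp (All (Imp (Mem 0 1) (lift 1 \<phi>))) \<phi>)) (All \<phi>))"
proof -
  let ?Q = "\<lambda>v x. forces v (case_nat x e) \<phi>"
  have "?Q v' a"
    if "v \<preceq> v'"
      and "\<forall>v' a. v \<preceq> v' \<longrightarrow> (\<forall>v'' x. v' \<preceq> v'' \<longrightarrow> fmem v'' x a \<longrightarrow> ?Q v'' x) \<longrightarrow> ?Q v' a"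
    for v v' a
    using fmem_induct[of v ?Q] that forces_case_nat_feq by blast
  then show ?thesis
    by (simp only: forces_bounded_simps) (simp add: forces_lift case_nat_comp_liftv_1)
qed

fun nat_name :: "nat \<Rightarrow> name" where
  "nat_name 0 = mk_name {}"
| "nat_name (Suc n) = mk_name (insert (nat_name n, Always) (children (nat_name n)))"

definition omega_name :: name where
  "omega_name = mk_name (range (\<lambda>n. (nat_name n, Always)))"

lemma not_fmem_nat_name_0 [simp]: "\<not> fmem w x (nat_name 0)"
  by (simp add: fmem_def)

lemma fmem_nat_name_Suc: "fmem w x (nat_name (Suc n)) \<longleftrightarrow> feq w x (nat_name n) \<or> fmem w x (nat_name n)"
  by (auto simp: fmem_def)

declare nat_name.simps [simp del]

lemma fmem_omega_name: "fmem w x omega_name \<longleftrightarrow> (\<exists>n. feq w x (nat_name n))"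
  by (auto simp: fmem_def omega_name_def)

lemma feq_nat_name_0_iff: "feq w x (nat_name 0) \<longleftrightarrow> (\<forall>v y. w \<preceq> v \<longrightarrow> \<not> fmem v y x)"
  by (meson feq_extensional feq_mono fmem_feq_right not_fmem_nat_name_0)

lemma feq_nat_name_Suc_iff:
  "feq w x (nat_name (Suc n)) \<longleftrightarrow>
     (\<forall>v y. w \<preceq> v \<longrightarrow> (fmem v y x \<longleftrightarrow> fmem v y (nat_name n) \<or> feq v y (nat_name n)))"
  by (meson feq_extensional feq_mono feq_sym fmem_feq_right fmem_nat_name_Suc)

lemma forces_ind_omega_name: "forces w (case_nat omega_name e) (ind 0)"
proof -
  have "\<exists>y. fmem v y omega_name \<and> (\<forall>v' z. v \<preceq> v' \<longrightarrow> (fmem v' z y \<longleftrightarrow> fmem v' z x \<or> feq v' z x))"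
    if "fmem v x omega_name" for v x
  proof -
    from that obtain n where n: "feq v x (nat_name n)"
      by (auto simp: fmem_omega_name)
    have "fmem v' z (nat_name (Suc n)) \<longleftrightarrow> fmem v' z x \<or> feq v' z x" if "v \<preceq> v'" for v' z
      using feq_mono[OF that n] fmem_nat_name_Suc by (meson feq_sym feq_trans fmem_feq_right)
    moreover have "fmem v (nat_name (Suc n)) omega_name"
      using fmem_omega_name feq_refl by blast
    ultimately show ?thesis by blast
  qed
  moreover have "fmem w (nat_name 0) omega_name"
    using fmem_omega_name feq_refl by blast
  ultimately show ?thesis
    unfolding ind_def by (simp only: forces_bounded_simps) (auto simp: forces_isEmpty forces_isSucc)
qed

lemma fmem_nat_name_if_forces_ind:
  assumes "forces w E (ind 0)"
  shows "fmem w (nat_name n) (E 0)"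
proof -
  have zero: "\<exists>x. fmem w x (E 0) \<and> (\<forall>v y. w \<preceq> v \<longrightarrow> \<not> fmem v y x)"
   and succ: "\<And>x. fmem w x (E 0) \<Longrightarrow>
      \<exists>x'. fmem w x' (E 0) \<and> (\<forall>v y. w \<preceq> v \<longrightarrow> (fmem v y x' \<longleftrightarrow> fmem v y x \<or> feq v y x))"
    using assms unfolding ind_def
    by (simp_all only: forces_bounded_simps) (auto simp: forces_isEmpty forces_isSucc)
  show ?thesis
  proof (induction n)
    case 0
    with zero show ?case
      by (meson feq_nat_name_0_iff fmem_feq_left)
  next
    case (Suc n)
    with succ[OF Suc] show ?case
      by (meson feq_nat_name_Suc_iff fmem_feq_left)
  qed
qed

lemma forces_strong_infinity: "forces w e (Ex (Conj (ind 0) (All (Imp (ind 0) (subsetf 1 0)))))"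
proof -
  have "fmem v' z d"
    if "w \<preceq> v" "v \<preceq> v'" "forces v (case_nat d (case_nat omega_name e)) (ind 0)"
      and "fmem v' z omega_name"
    for v v' d z
  proof -
    from \<open>fmem v' z omega_name\<close> obtain n where "feq v' (nat_name n) z"
      by (meson fmem_omega_name feq_sym)
    moreover have "fmem v' (nat_name n) d"
      using fmem_nat_name_if_forces_ind[OF that(3)] fmem_mono[OF \<open>v \<preceq> v'\<close>] by simp
    ultimately show ?thesis
      using fmem_feq_left by blast
  qed
  then show ?thesis
    by (simp only: forces_bounded_simps)
      (auto simp: forces_ind_omega_name forces_subsetf intro!: exI[of _ omega_name])
qed

theorem IKP_forced: "\<psi> \<in> IKP \<Longrightarrow> forces w e \<psi>"
  by (induction rule: IKP.induct)
    (simp_all only: forces_extensionality forces_empty_set forces_pairing forces_union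
      forces_separation forces_collection forces_set_induction forces_strong_infinity)

corollary forces_if_IKP_proves: "IKP_proves \<phi> \<Longrightarrow> forces w e \<phi>"
  unfolding IKP_proves_def using prv_sound IKP_forced by blast

section \<open>1 is a plump ordinal\<close>

lemma prv_AllE_inst: "prv T \<Gamma> (All \<phi>) \<Longrightarrow> subst \<phi> 0 t = \<psi> \<Longrightarrow> prv T \<Gamma> \<psi>"
  using prv.AllE by blast

lemma lift_isOne [simp]: "lift k (isOne a) = isOne (liftv k a)"
  by (simp add: isOne_def isEmpty_def Iff_def liftv_def)

lemma prv_isOne_absurd:
  assumes "prv T \<Gamma> (isOne a)" and "prv T \<Gamma> (Mem b a)" and "prv T \<Gamma> (Mem c b)"
  shows "prv T \<Gamma> \<phi>"
proof -
  have "prv T \<Gamma> (Iff (Mem b a) (isEmpty b))"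
    using assms(1) unfolding isOne_def
    by (rule prv_AllE_inst) (simp add: isEmpty_def Iff_def substv_def)
  then have "prv T \<Gamma> (isEmpty b)"
    using assms(2) unfolding Iff_def by (blast intro: prv.ConjE1 prv.ImpE)
  then have "prv T \<Gamma> (Imp (Mem c b) FF)"
    unfolding isEmpty_def by (rule prv_AllE_inst) (simp add: substv_def)
  then show ?thesis
    using assms(3) by (blast intro: prv.ImpE prv.FFE)
qed

lemma prv_isOne_memI:
  assumes "prv T \<Gamma> (isOne a)" and "prv T \<Gamma> (isEmpty b)"
  shows "prv T \<Gamma> (Mem b a)"
proof -
  have "prv T \<Gamma> (Iff (Mem b a) (isEmpty b))"
    using assms(1) unfolding isOne_def
    by (rule prv_AllE_inst) (simp add: isEmpty_def Iff_def substv_def)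
  then show ?thesis
    using assms(2) unfolding Iff_def by (blast intro: prv.ConjE2 prv.ImpE)
qed

text \<open>Every clause but one has hypotheses x \<in> y \<in> 1, which are absurd as elements of 1 are empty;
  the remaining one asks for a subset of an element of 1 to be in 1, and such a subset is empty.\<close>

lemma prv_one_PlOrd: "prv T {} one_PlOrd"
  unfolding one_PlOrd_def plord_def ordf_def transf_def subsetf_def
proof (intro prv.AllI prv.ImpI prv.ConjI; simp add: liftv_def Suc_1 flip: One_nat_def)
  show "prv T {Mem 0 1, Mem 1 2, isOne 2} (Mem 0 2)"
    by (rule prv_isOne_absurd[of _ _ 2 1 0]; rule prv.Assm; simp)
  show "prv T {Mem 0 1, Mem 1 2, Mem 2 3, isOne 3} (Mem 0 2)"
    by (rule prv_isOne_absurd[of _ _ 3 2 1]; rule prv.Assm; simp)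
  show "prv T {Mem 2 0, Mem 0 3, Conj (All (Imp (Mem 0 2) (Mem 0 3))) (lift 0 (relpl 2 0)),
      Mem 2 3, isOne 3} (Mem 1 0)"
    by (rule prv_isOne_absurd[of _ _ 3 0 2]; rule prv.Assm; simp)
next
  let ?\<Gamma> = "{Conj (All (Imp (Mem 0 1) (Mem 0 2))) (relpl 2 0), Mem 1 2, isOne 2}"
  let ?\<Delta> = "insert (Mem 0 1) (lift 0 ` ?\<Gamma>)"
  have "prv T ?\<Delta> FF"
  proof (rule prv_isOne_absurd[of _ _ 3 2 0])
    show "prv T ?\<Delta> (isOne 3)" and "prv T ?\<Delta> (Mem 2 3)"
      by (rule prv.Assm; simp add: liftv_def)+
    have "prv T ?\<Delta> (All (Imp (Mem 0 2) (Mem 0 3)))"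
      by (rule prv.ConjE1[where \<psi> = "lift 0 (relpl 2 0)"], rule prv.Assm) (simp add: liftv_def)
    then have "prv T ?\<Delta> (Imp (Mem 0 1) (Mem 0 2))"
      by (rule prv_AllE_inst) (simp add: substv_def)
    then show "prv T ?\<Delta> (Mem 0 2)"
      by (rule prv.ImpE) (rule prv.Assm, simp)
  qed
  then have "prv T ?\<Gamma> (isEmpty 0)"
    unfolding isEmpty_def by (intro prv.AllI prv.ImpI) (simp flip: One_nat_def)
  then show "prv T ?\<Gamma> (Mem 0 2)"
    by (rule prv_isOne_memI[rotated]) (rule prv.Assm, simp)
qed

lemma IKP_proves_one_PlOrd: "IKP_proves one_PlOrd"
  unfolding IKP_proves_def by (rule prv_one_PlOrd)

section \<open>Plump subsets of 1 at the root\<close>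

definition one_name :: name where
  "one_name = nat_name 1"

definition one_part :: "nat set \<Rightarrow> name" where
  "one_part S = mk_name {(nat_name 0, On_leaves S)}"

lemma fmem_one_name: "fmem w x one_name \<longleftrightarrow> feq w x (nat_name 0)"
  by (simp add: one_name_def fmem_nat_name_Suc)

lemma fmem_one_part: "fmem w x (one_part S) \<longleftrightarrow> holds w (On_leaves S) \<and> feq w x (nat_name 0)"
  by (simp add: one_part_def fmem_def)

lemma forces_isOne_one_name: "forces w (case_nat one_name e) (isOne 0)"
  by (simp add: forces_isOne fmem_one_name feq_nat_name_0_iff)

lemma forces_subsetf_one_part_one_name:
  "E a = one_part S \<Longrightarrow> E b = one_name \<Longrightarrow> forces w E (subsetf a b)"
  by (simp add: forces_subsetf fmem_one_part fmem_one_name)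

lemma fmem_one_part_if_subset:
  assumes "fmem v x (one_part S)" and "v \<preceq> v'"
    and "\<And>v'' z. v' \<preceq> v'' \<Longrightarrow> fmem v'' z y \<Longrightarrow> fmem v'' z x"
  shows "fmem v' y (one_part S)"
proof -
  have "feq v'' x (nat_name 0)" if "v' \<preceq> v''" for v''
    using assms(1,2) that by (meson feq_mono fmem_one_part wle_trans)
  with assms(3) have "feq v' y (nat_name 0)"
    by (meson feq_nat_name_0_iff fmem_feq_right not_fmem_nat_name_0 wle_refl)
  with assms(1,2) show ?thesis
    by (meson fmem_one_part holds_mono)
qed

lemma forces_relpl_one_part: "E g = one_part S \<Longrightarrow> forces w E (relpl a g)"
  unfolding relpl_def
  by (simp only: forces_bounded_simps) (auto simp: forces_subsetf intro: fmem_one_part_if_subset)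

lemma one_part_eq_if_feq_Root: "feq Root (one_part S) (one_part S') \<Longrightarrow> S = S'"
proof -
  have "S \<subseteq> S'" if "feq Root (one_part S) (one_part S')" for S S'
  proof
    fix n assume "n \<in> S"
    then have "fmem (Leaf n) (nat_name 0) (one_part S)"
      by (simp add: fmem_one_part)
    moreover have "feq (Leaf n) (one_part S) (one_part S')"
      using that by (rule feq_mono[rotated]) simp
    ultimately have "fmem (Leaf n) (nat_name 0) (one_part S')"
      by (rule fmem_feq_right)
    then show "n \<in> S'"
      by (simp add: fmem_one_part)
  qed
  then show "feq Root (one_part S) (one_part S') \<Longrightarrow> S = S'"
    by (meson feq_sym subset_antisym)
qed

lemma uncountable_nat_set_set: "uncountable (UNIV :: nat set set)"
  using Cantors_theorem[of "UNIV :: nat set"] by (auto simp: uncountable_def)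

lemma ex_not_fmem_Root_one_part: "\<exists>S. \<not> fmem Root (one_part S) s"
proof (rule ccontr)
  assume "\<nexists>S. \<not> fmem Root (one_part S) s"
  then obtain c where c: "\<And>S. c S \<in> children s \<and> feq Root (one_part S) (fst (c S))"
    unfolding fmem_def by metis
  have "inj (fst \<circ> c)"
  proof (rule injI)
    fix S S' assume "(fst \<circ> c) S = (fst \<circ> c) S'"
    with c have "feq Root (one_part S) (one_part S')"
      by (metis comp_apply feq_sym feq_trans)
    then show "S = S'"
      by (rule one_part_eq_if_feq_Root)
  qed
  moreover have "countable (range (fst \<circ> c))"
    by (rule countable_subset[of _ "fst ` children s"]) (use c in auto)
  ultimately show False
    using countable_image_inj_on uncountable_nat_set_set by blast
qed

lemma forces_plord_plump:
  assumes "forces w E (plord 0)" and "fmem w b (E 0)"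
    and "forces w (case_nat g (case_nat b E)) (subsetf 0 1)"
    and "forces w (case_nat g (case_nat b E)) (relpl 2 0)"
  shows "fmem w g (E 0)"
  using assms unfolding plord_def
  by (simp only: forces_bounded_simps) (simp add: numeral_2_eq_2, meson wle_refl)

lemma one_plsucc_exists_not_forced: "\<not> forces Root e one_plsucc_exists"
proof
  assume "forces Root e one_plsucc_exists"
  then obtain s where s: "forces Root (case_nat s (case_nat one_name e))
      (All (Iff (Mem 0 1) (Conj (subsetf 0 2) (relpl 2 0))))"
    unfolding one_plsucc_exists_def using forces_isOne_one_name
    by (simp only: forces_bounded_simps) (meson Root_wle)
  have "fmem Root (one_part S) s" for S
  proof -
    let ?E = "case_nat (one_part S) (case_nat s (case_nat one_name e))"
    have "forces Root ?E (Iff (Mem 0 1) (Conj (subsetf 0 2) (relpl 2 0)))"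
      using s by simp
    moreover have "forces Root ?E (subsetf 0 2)"
      by (rule forces_subsetf_one_part_one_name) simp_all
    moreover have "forces Root ?E (relpl 2 0)"
      by (rule forces_relpl_one_part) simp
    ultimately show ?thesis
      by (simp add: forces_Iff)
  qed
  then show False
    using ex_not_fmem_Root_one_part by blast
qed

lemma PlUb_not_forced: "\<not> forces Root e PlUb"
proof
  assume "forces Root e PlUb"
  moreover have "forces Root (case_nat one_name e) (plord 0)"
    using forces_if_IKP_proves[OF IKP_proves_one_PlOrd] forces_isOne_one_name
    unfolding one_PlOrd_def by (simp only: forces_bounded_simps) (meson Root_wle)
  ultimately obtain b where b: "forces Root (case_nat b (case_nat one_name e)) (plord 0)"
    and "fmem Root one_name b"
    unfolding PlUb_def by (simp only: forces_bounded_simps) (simp, blast)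
  then have "fmem Root (one_part S) b" for S
    using forces_plord_plump[OF b] forces_subsetf_one_part_one_name forces_relpl_one_part
    by simp
  then show False
    using ex_not_fmem_Root_one_part by blast
qed

theorem proposition3p2:
  shows "\<not> IKP_proves PlUb \<and> IKP_proves one_PlOrd \<and> \<not> IKP_proves one_plsucc_exists"
  using IKP_proves_one_PlOrd PlUb_not_forced one_plsucc_exists_not_forced forces_if_IKP_proves
  by blast

end
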